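(* DBS is complete and optimal: on every MAPF-DL instance, and for every choice of tie-breaking and of the groups selected for merging or splitting, DBS terminates and returns a solution whose number of unsuccessful agents is the minimum over all solutions of the instance.
   Context: MAPF-DL. An instance consists of a deadline $T_{\mathrm{end}}\in\mathbb{N}$, a finite undirected graph $G=(V,E)$, and $M$ agents $a_1,\dots,a_M$; agent $a_i$ has a start vertex $s_i$ and a goal vertex $g_i$, and the graph distance from $s_i$ to $g_i$ is at most $T_{\mathrm{end}}$. A path for $a_i$ is a map $l_i:\{0,\dots,T_{\mathrm{end}}\}\to V$ with $l_i(0)=s_i$, $l_i(T_{\mathrm{end}})=g_i$, and for each $t\ge1$ either $(l_i(t-1),l_i(t))\in E$ or $l_i(t-1)=l_i(t)$. A plan assigns a path to each agent of some subset (the successful agents); the others are unsuccessful and get no path. Two distinct successful agents collide if they occupy the same vertex at the same time step, or traverse the same edge in opposite directions between time steps $t$ and $t+1$. A solution is a plan with no collisions; its cost is the number of unsuccessful agents. A set (group) $\gamma$ of agents is consistent if there is a solution in which every agent of $\gamma$ is successful and all other agents are unsuccessful (the empty group is consistent). DBS assumes an exact oracle deciding consistency and, for consistent $\gamma$, producing such a solution. Algorithm DBS (Death-Based Search). Best-first search over a death tree (DT); each DT node $N$ has a collection $N.\mathrm{live}$ of pairwise disjoint groups of agents and a cost $N.\mathrm{cost}$ (number of agents declared unsuccessful). The root has $\mathrm{live}=\{\{a_1\},\dots,\{a_M\}\}$ and cost $0$; OPEN initially contains the root. Repeat: remove from OPEN a node $N$ of minimum cost (ties arbitrary). If all groups of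 $N.\mathrm{live}$ are consistent: if $N.\mathrm{live}$ consists of a single group $\gamma$, return a solution in which exactly the agents of $\gamma$ are successful; otherwise create one child $N'$ with $N'.\mathrm{live}=(N.\mathrm{live}\setminus\{\gamma_1,\gamma_2\})\cup\{\gamma_1\cup\gamma_2\}$, where $\gamma_1\neq\gamma_2$ are two groups of smallest size in $N.\mathrm{live}$ (ties arbitrary), and $N'.\mathrm{cost}=N.\mathrm{cost}$, and insert it into OPEN. Otherwise, let $\gamma$ be an inconsistent group of $N.\mathrm{live}$; for each agent $a_i\in\gamma$ create a child $N'$ with $N'.\mathrm{live}=(N.\mathrm{live}\setminus\{\gamma\})\cup\{\gamma\setminus\{a_i\}\}$ and $N'.\mathrm{cost}=N.\mathrm{cost}+1$, and insert it into OPEN. *)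

theory Defs
  imports Main "HOL-Library.Multiset"
begin

text \<open>Agents a_1..a_M are represented by
  the indices 0..<M; agent i has start s i and goal g i.\<close>

definition undirected_graph :: "'v set \<Rightarrow> ('v \<times> 'v) set \<Rightarrow> bool" where
  "undirected_graph V E \<longleftrightarrow> finite V \<and> E \<subseteq> V \<times> V \<and> (\<forall>u w. (u, w) \<in> E \<longrightarrow> (w, u) \<in> E)"

definition dist_le :: "('v \<times> 'v) set \<Rightarrow> 'v \<Rightarrow> 'v \<Rightarrow> nat \<Rightarrow> bool" where
  "dist_le E u w k \<longleftrightarrow>
     (\<exists>ps. ps \<noteq> [] \<and> hd ps = u \<and> last ps = w \<and> length ps \<le> Suc k \<and>
           (\<forall>i. Suc i < length ps \<longrightarrow> (ps ! i, ps ! Suc i) \<in> E))"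

definition mapf_instance ::
  "'v set \<Rightarrow> ('v \<times> 'v) set \<Rightarrow> nat \<Rightarrow> nat \<Rightarrow> (nat \<Rightarrow> 'v) \<Rightarrow> (nat \<Rightarrow> 'v) \<Rightarrow> bool" where
  "mapf_instance V E T M s g \<longleftrightarrow> undirected_graph V E \<and>
     (\<forall>i<M. s i \<in> V \<and> g i \<in> V \<and> dist_le E (s i) (g i) T)"

text \<open>A path from u to w with deadline T (only the values at times 0..T matter).\<close>
definition is_path ::
  "'v set \<Rightarrow> ('v \<times> 'v) set \<Rightarrow> nat \<Rightarrow> 'v \<Rightarrow> 'v \<Rightarrow> (nat \<Rightarrow> 'v) \<Rightarrow> bool" where
  "is_path V E T u w l \<longleftrightarrow> l 0 = u \<and> l T = w \<and> (\<forall>t\<le>T. l t \<in> V) \<and>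
     (\<forall>t. 1 \<le> t \<and> t \<le> T \<longrightarrow> (l (t - 1), l t) \<in> E \<or> l (t - 1) = l t)"

definition collide :: "('v \<times> 'v) set \<Rightarrow> nat \<Rightarrow> (nat \<Rightarrow> 'v) \<Rightarrow> (nat \<Rightarrow> 'v) \<Rightarrow> bool" where
  "collide E T l1 l2 \<longleftrightarrow>
     (\<exists>t\<le>T. l1 t = l2 t) \<or>
     (\<exists>t<T. (l1 t, l1 (Suc t)) \<in> E \<and> l1 t = l2 (Suc t) \<and> l1 (Suc t) = l2 t)"

text \<open>A plan is a partial map from agents to paths; its domain is the set of successful agents.\<close>
type_synonym 'v plan = "nat \<Rightarrow> (nat \<Rightarrow> 'v) option"

definition is_solution ::
  "'v set \<Rightarrow> ('v \<times> 'v) set \<Rightarrow> nat \<Rightarrow> nat \<Rightarrow> (nat \<Rightarrow> 'v) \<Rightarrow> (nat \<Rightarrow> 'v) \<Rightarrow> 'v plan \<Rightarrow> bool" where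
  "is_solution V E T M s g P \<longleftrightarrow> dom P \<subseteq> {..<M} \<and>
     (\<forall>i l. P i = Some l \<longrightarrow> is_path V E T (s i) (g i) l) \<and>
     (\<forall>i j li lj. i \<noteq> j \<longrightarrow> P i = Some li \<longrightarrow> P j = Some lj \<longrightarrow> \<not> collide E T li lj)"

definition plan_cost :: "nat \<Rightarrow> 'v plan \<Rightarrow> nat" where
  "plan_cost M P = card ({..<M} - dom P)"

definition consistent ::
  "'v set \<Rightarrow> ('v \<times> 'v) set \<Rightarrow> nat \<Rightarrow> nat \<Rightarrow> (nat \<Rightarrow> 'v) \<Rightarrow> (nat \<Rightarrow> 'v) \<Rightarrow> nat set \<Rightarrow> bool" where
  "consistent V E T M s g \<gamma> \<longleftrightarrow> (\<exists>P. is_solution V E T M s g P \<and> dom P = \<gamma>)"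

text \<open>A death-tree node: (live, cost), live being a collection (multiset) of groups.\<close>
type_synonym dt_node = "nat set multiset \<times> nat"

datatype 'v dbs_state = Running "dt_node multiset" | Done "'v plan"

definition dbs_init :: "nat \<Rightarrow> 'v dbs_state" where
  "dbs_init M = Running {# (image_mset (\<lambda>i. {i}) (mset_set {..<M}), 0) #}"

text \<open>One iteration of the main loop. All choices (which minimum-cost node, which smallest
  groups, which inconsistent group, which oracle solution) are nondeterministic.\<close>
inductive dbs_step ::
  "'v set \<Rightarrow> ('v \<times> 'v) set \<Rightarrow> nat \<Rightarrow> nat \<Rightarrow> (nat \<Rightarrow> 'v) \<Rightarrow> (nat \<Rightarrow> 'v)
   \<Rightarrow> 'v dbs_state \<Rightarrow> 'v dbs_state \<Rightarrow> bool"
  for V E T M s g where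
  return:
    "\<lbrakk> N \<in># Op; \<forall>N'\<in>#Op. snd N \<le> snd N';
       \<forall>\<gamma>\<in>#fst N. consistent V E T M s g \<gamma>;
       fst N = {#\<gamma>#}; is_solution V E T M s g P; dom P = \<gamma> \<rbrakk>
     \<Longrightarrow> dbs_step V E T M s g (Running Op) (Done P)"
| merge:
    "\<lbrakk> N \<in># Op; \<forall>N'\<in>#Op. snd N \<le> snd N';
       \<forall>\<gamma>\<in>#fst N. consistent V E T M s g \<gamma>;
       size (fst N) \<noteq> 1;
       \<gamma>1 \<in># fst N; \<forall>\<delta>\<in>#fst N. card \<gamma>1 \<le> card \<delta>;
       \<gamma>2 \<in># fst N - {#\<gamma>1#}; \<forall>\<delta>\<in>#fst N - {#\<gamma>1#}. card \<gamma>2 \<le> card \<delta> \<rbrakk>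
     \<Longrightarrow> dbs_step V E T M s g (Running Op)
           (Running (Op - {#N#} + {# (fst N - {#\<gamma>1, \<gamma>2#} + {#\<gamma>1 \<union> \<gamma>2#}, snd N) #}))"
| split:
    "\<lbrakk> N \<in># Op; \<forall>N'\<in>#Op. snd N \<le> snd N';
       \<gamma> \<in># fst N; \<not> consistent V E T M s g \<gamma> \<rbrakk>
     \<Longrightarrow> dbs_step V E T M s g (Running Op)
           (Running (Op - {#N#} +
              image_mset (\<lambda>a. (fst N - {#\<gamma>#} + {#\<gamma> - {a}#}, Suc (snd N))) (mset_set \<gamma>)))"

end

theory Submission
  imports Defs
begin

text \<open>Every node in OPEN has pairwise disjoint groups whose sizes add up to M minus its cost, and
  every consistent group D lies inside the agents of some node in OPEN: splitting an
  inconsistent \<open>\<gamma>\<close> keeps this true because D misses some agent of \<open>\<gamma>\<close>, and the child that kills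
  exactly this agent still contains D. Hence every solution costs at least the cost of some node
  in OPEN, whereas the plan returned at a minimum-cost node with a single consistent group \<open>\<gamma>\<close>
  costs M - |\<open>\<gamma>\<close>|, which is the cost of that node. DBS terminates because each step replaces a
  node by finitely many nodes of smaller weight (number of groups plus sum of group sizes), so
  the multiset of weights of OPEN decreases in the multiset ordering.\<close>

lemma mset_ex_min:
  fixes f :: "'a \<Rightarrow> 'b::linorder"
  assumes "A \<noteq> {#}"
  shows "\<exists>x\<in>#A. \<forall>y\<in>#A. f x \<le> f y"
proof -
  obtain m where "m \<in> f ` set_mset A" "\<not> (\<exists>z\<in>f ` set_mset A. z < m)"
    using ex_min_if_finite[of "f ` set_mset A"] assms by auto
  then show ?thesis by (auto simp: not_less)
qed

lemma card_Union_mset_le: "card (\<Union>(set_mset L)) \<le> (\<Sum>A\<in>#L. card A)"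
proof (induction L)
  case (add A L)
  have "card (A \<union> \<Union>(set_mset L)) \<le> card A + card (\<Union>(set_mset L))"
    by (rule card_Un_le)
  with add show ?case by simp
qed simp

lemma mult1_replace_by_smaller:
  assumes "x \<in># A" and "\<forall>y\<in>#K. f y < f x"
  shows "(image_mset f (A - {#x#} + K), image_mset f A) \<in> mult1 less_than"
proof -
  have "image_mset f A = add_mset (f x) (image_mset f (A - {#x#}))"
    using assms(1) by (simp add: image_mset_Diff)
  then show ?thesis
    unfolding mult1_def using assms(2)
    by (intro CollectI case_prodI exI[of _ "f x"] exI[of _ "image_mset f (A - {#x#})"]
        exI[of _ "image_mset f K"]) auto
qed

lemma consistent_subset:
  assumes "consistent V E T M s g D" "\<gamma> \<subseteq> D"
  shows "consistent V E T M s g \<gamma>"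
proof -
  obtain P where P: "is_solution V E T M s g P" "dom P = D"
    using assms(1) by (auto simp: consistent_def)
  have "is_solution V E T M s g (P |` \<gamma>)"
    using P(1) unfolding is_solution_def restrict_map_def
    by (auto split: if_splits simp: dom_def)
  moreover have "dom (P |` \<gamma>) = \<gamma>" using P assms(2) by auto
  ultimately show ?thesis unfolding consistent_def by blast
qed

lemma consistent_empty: "consistent V E T M s g {}"
  unfolding consistent_def is_solution_def by (rule exI[of _ Map.empty]) auto

lemma consistent_subset_lessThan: "consistent V E T M s g D \<Longrightarrow> D \<subseteq> {..<M}"
  unfolding consistent_def is_solution_def by blast

lemma plan_cost_solution:
  "is_solution V E T M s g P \<Longrightarrow> plan_cost M P = M - card (dom P)"
  unfolding plan_cost_def is_solution_def
  by (metis card_Diff_subset card_lessThan finite_subset finite_lessThan)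

definition agents :: "dt_node \<Rightarrow> nat set" where
  "agents N = \<Union>(set_mset (fst N))"

definition live_size :: "dt_node \<Rightarrow> nat" where
  "live_size N = (\<Sum>\<gamma>\<in>#fst N. card \<gamma>)"

definition node_weight :: "dt_node \<Rightarrow> nat" where
  "node_weight N = size (fst N) + live_size N"

text \<open>Since the number of agents never exceeds the live size, their equality says that the groups
  are pairwise disjoint.\<close>
definition dt_node_inv :: "nat \<Rightarrow> dt_node \<Rightarrow> bool" where
  "dt_node_inv M N \<longleftrightarrow> fst N \<noteq> {#} \<and> (\<forall>\<gamma>\<in>#fst N. finite \<gamma>) \<and>
     live_size N = card (agents N) \<and> snd N + card (agents N) = M"

lemma finite_agents: "\<forall>\<gamma>\<in>#fst N. finite \<gamma> \<Longrightarrow> finite (agents N)"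
  by (auto simp: agents_def)

lemma dt_node_inv_merge:
  assumes inv: "dt_node_inv M N" and \<gamma>1: "\<gamma>1 \<in># fst N" and \<gamma>2: "\<gamma>2 \<in># fst N - {#\<gamma>1#}"
  defines "N' \<equiv> (fst N - {#\<gamma>1, \<gamma>2#} + {#\<gamma>1 \<union> \<gamma>2#}, snd N)"
  shows "dt_node_inv M N'" and "agents N' = agents N" and "node_weight N' < node_weight N"
proof -
  obtain L where L: "fst N = add_mset \<gamma>1 (add_mset \<gamma>2 L)"
    using \<gamma>1 \<gamma>2 by (metis insert_DiffM multi_member_split)
  have N': "fst N' = add_mset (\<gamma>1 \<union> \<gamma>2) L" unfolding N'_def L by simp
  show agents: "agents N' = agents N" unfolding agents_def N' L by auto
  have "live_size N' \<le> live_size N"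
    unfolding live_size_def N' L by (simp add: card_Un_le)
  moreover have "card (agents N') \<le> live_size N'"
    unfolding agents_def live_size_def by (rule card_Union_mset_le)
  ultimately have "live_size N' = card (agents N')"
    using inv agents by (simp add: dt_node_inv_def)
  then show "dt_node_inv M N'"
    using inv agents unfolding dt_node_inv_def N' L by (auto simp: N'_def)
  show "node_weight N' < node_weight N"
    using \<open>live_size N' \<le> live_size N\<close> unfolding node_weight_def N' L by simp
qed

lemma dt_node_inv_split:
  assumes inv: "dt_node_inv M N" and \<gamma>: "\<gamma> \<in># fst N" and a: "a \<in> \<gamma>"
  defines "N' \<equiv> (fst N - {#\<gamma>#} + {#\<gamma> - {a}#}, Suc (snd N))"
  shows "dt_node_inv M N'" and "agents N - {a} \<subseteq> agents N'"
    and "node_weight N' < node_weight N"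
proof -
  obtain L where L: "fst N = add_mset \<gamma> L" using \<gamma> by (metis multi_member_split)
  have N': "fst N' = add_mset (\<gamma> - {a}) L" unfolding N'_def L by simp
  have fin: "\<forall>\<delta>\<in>#fst N'. finite \<delta>" and "finite \<gamma>"
    using inv unfolding dt_node_inv_def N' L by auto
  have "finite (agents N)" using inv by (intro finite_agents) (simp add: dt_node_inv_def)
  show sub: "agents N - {a} \<subseteq> agents N'" unfolding agents_def N' L by auto
  have "card \<gamma> > 0" using \<open>finite \<gamma>\<close> a card_gt_0_iff by blast
  then have size: "Suc (live_size N') = live_size N"
    unfolding live_size_def N' L using \<open>finite \<gamma>\<close> a by simp
  have "a \<in> agents N" using a \<gamma> by (auto simp: agents_def)
  then have "card (agents N) - 1 = card (agents N - {a})"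
    using \<open>finite (agents N)\<close> by simp
  also have "\<dots> \<le> card (agents N')" by (rule card_mono[OF finite_agents[OF fin] sub])
  finally have "card (agents N) - 1 \<le> card (agents N')" .
  moreover have "card (agents N') \<le> live_size N'"
    unfolding agents_def live_size_def by (rule card_Union_mset_le)
  ultimately have "live_size N' = card (agents N')" and "Suc (card (agents N')) = card (agents N)"
    using inv size by (auto simp: dt_node_inv_def)
  then show "dt_node_inv M N'"
    using inv fin unfolding dt_node_inv_def by (simp add: N' N'_def)
  show "node_weight N' < node_weight N"
    using size unfolding node_weight_def N' L by simp
qed

context
  fixes V :: "'v set" and E :: "('v \<times> 'v) set" and T M :: nat and s g :: "nat \<Rightarrow> 'v"
begin

definition open_covers :: "dt_node multiset \<Rightarrow> bool" where
  "open_covers Op \<longleftrightarrow> (\<forall>D. consistent V E T M s g D \<longrightarrow> (\<exists>N\<in>#Op. D \<subseteq> agents N))"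

definition open_inv :: "dt_node multiset \<Rightarrow> bool" where
  "open_inv Op \<longleftrightarrow> (\<forall>N\<in>#Op. dt_node_inv M N) \<and> open_covers Op"

definition optimal_solution :: "'v plan \<Rightarrow> bool" where
  "optimal_solution P \<longleftrightarrow> is_solution V E T M s g P \<and>
     (\<forall>P'. is_solution V E T M s g P' \<longrightarrow> plan_cost M P \<le> plan_cost M P')"

fun dbs_inv :: "'v dbs_state \<Rightarrow> bool" where
  "dbs_inv (Running Op) = open_inv Op"
| "dbs_inv (Done P) = optimal_solution P"

lemma dbs_inv_init:
  assumes "0 < M" shows "dbs_inv (dbs_init M)"
proof -
  define N :: dt_node where "N = (image_mset (\<lambda>i. {i}) (mset_set {..<M}), 0)"
  have agents: "agents N = {..<M}" by (auto simp: N_def agents_def)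
  have "live_size N = M" by (simp add: N_def live_size_def multiset.map_comp o_def)
  moreover have "fst N \<noteq> {#}" using assms by (auto simp: N_def mset_set_empty_iff)
  ultimately have "dt_node_inv M N"
    using agents unfolding dt_node_inv_def by (simp add: N_def)
  moreover have "open_covers {#N#}"
    using agents by (auto simp: open_covers_def dest: consistent_subset_lessThan)
  ultimately show ?thesis by (simp add: dbs_init_def open_inv_def N_def)
qed

lemma open_cost_le_solution_cost:
  assumes "open_inv Op" and P: "is_solution V E T M s g P"
  shows "\<exists>W\<in>#Op. snd W \<le> plan_cost M P"
proof -
  have "consistent V E T M s g (dom P)" using P by (auto simp: consistent_def)
  then obtain W where W: "W \<in># Op" "dom P \<subseteq> agents W"
    using assms(1) by (auto simp: open_inv_def open_covers_def)
  have inv: "dt_node_inv M W" using assms(1) W(1) by (simp add: open_inv_def)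
  then have "card (dom P) \<le> card (agents W)"
    using W(2) finite_agents by (simp add: dt_node_inv_def card_mono)
  then have "snd W \<le> plan_cost M P"
    using inv plan_cost_solution[OF P] by (auto simp: dt_node_inv_def)
  then show ?thesis using W(1) by blast
qed

lemma optimal_solution_at_min_cost:
  assumes "open_inv Op" and N: "N \<in># Op" "\<forall>N'\<in>#Op. snd N \<le> snd N'"
    and "fst N = {#\<gamma>#}" and P: "is_solution V E T M s g P" "dom P = \<gamma>"
  shows "optimal_solution P"
proof -
  have "snd N + card \<gamma> = M"
    using assms(1,4) N(1) by (auto simp: open_inv_def dt_node_inv_def agents_def)
  then have "plan_cost M P = snd N" using plan_cost_solution[OF P(1)] P(2) by simp
  moreover have "snd N \<le> plan_cost M P'" if "is_solution V E T M s g P'" for P'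
    using open_cost_le_solution_cost[OF assms(1) that] N(2) order_trans by blast
  ultimately show ?thesis using P(1) by (simp add: optimal_solution_def)
qed

lemma open_covers_merge:
  assumes "open_covers Op" and "N \<in># Op" and "agents N' = agents N"
  shows "open_covers (Op - {#N#} + {#N'#})"
  unfolding open_covers_def
proof (intro allI impI)
  fix D assume "consistent V E T M s g D"
  then obtain W where W: "W \<in># Op" "D \<subseteq> agents W"
    using assms(1) by (auto simp: open_covers_def)
  show "\<exists>X\<in>#Op - {#N#} + {#N'#}. D \<subseteq> agents X"
  proof (cases "W = N")
    case True
    then show ?thesis using W(2) assms(3) by simp
  next
    case False
    then have "W \<in># Op - {#N#}" using W(1) by (simp add: in_diff_count)
    then show ?thesis using W(2) by auto
  qed
qed

lemma open_covers_split:
  assumes "open_covers Op" and "N \<in># Op" and "\<not> consistent V E T M s g \<gamma>" and "finite \<gamma>"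
    and "\<forall>a\<in>\<gamma>. agents N - {a} \<subseteq> agents (child a)"
  shows "open_covers (Op - {#N#} + image_mset child (mset_set \<gamma>))"
  unfolding open_covers_def
proof (intro allI impI)
  fix D assume D: "consistent V E T M s g D"
  then obtain W where W: "W \<in># Op" "D \<subseteq> agents W"
    using assms(1) by (auto simp: open_covers_def)
  show "\<exists>X\<in>#Op - {#N#} + image_mset child (mset_set \<gamma>). D \<subseteq> agents X"
  proof (cases "W = N")
    case True
    obtain a where a: "a \<in> \<gamma>" "a \<notin> D"
      using assms(3) consistent_subset[OF D] by blast
    have "D \<subseteq> agents N - {a}" using W True a(2) by blast
    also have "\<dots> \<subseteq> agents (child a)" using assms(5) a(1) by blast
    finally show ?thesis using a(1) assms(4) by (intro bexI[of _ "child a"]) simp_all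
  next
    case False
    then have "W \<in># Op - {#N#}" using W(1) by (simp add: in_diff_count)
    then show ?thesis using W(2) by auto
  qed
qed

lemma dbs_inv_step:
  assumes "dbs_step V E T M s g S S'" and "dbs_inv S"
  shows "dbs_inv S'"
  using assms(1)
proof cases
  case (return N Op \<gamma> P)
  then show ?thesis
    using assms(2) optimal_solution_at_min_cost by simp
next
  case (merge N Op \<gamma>1 \<gamma>2)
  define N' where "N' = (fst N - {#\<gamma>1, \<gamma>2#} + {#\<gamma>1 \<union> \<gamma>2#}, snd N)"
  have inv: "open_inv Op" using assms(2) merge by simp
  then have "dt_node_inv M N" using merge by (simp add: open_inv_def)
  note N' = dt_node_inv_merge[OF this \<open>\<gamma>1 \<in># fst N\<close> \<open>\<gamma>2 \<in># fst N - {#\<gamma>1#}\<close>,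
      folded N'_def]
  have "\<forall>X\<in>#Op - {#N#} + {#N'#}. dt_node_inv M X"
    using inv N'(1) by (auto simp: open_inv_def dest: in_diffD)
  moreover have "open_covers (Op - {#N#} + {#N'#})"
    using inv open_covers_merge[OF _ \<open>N \<in># Op\<close> N'(2)] by (simp add: open_inv_def)
  ultimately have "open_inv (Op - {#N#} + {#N'#})" by (simp add: open_inv_def)
  then show ?thesis using merge by (simp add: N'_def)
next
  case (split N Op \<gamma>)
  define child where "child a = (fst N - {#\<gamma>#} + {#\<gamma> - {a}#}, Suc (snd N))" for a
  have inv: "open_inv Op" using assms(2) split by simp
  then have "dt_node_inv M N" using split by (simp add: open_inv_def)
  note child = dt_node_inv_split[OF this \<open>\<gamma> \<in># fst N\<close>, folded child_def]
  have "finite \<gamma>"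
    using \<open>dt_node_inv M N\<close> \<open>\<gamma> \<in># fst N\<close> by (simp add: dt_node_inv_def)
  have "\<forall>X\<in>#Op - {#N#} + image_mset child (mset_set \<gamma>). dt_node_inv M X"
    using inv child(1) \<open>finite \<gamma>\<close> by (auto simp: open_inv_def dest: in_diffD)
  moreover have "open_covers (Op - {#N#} + image_mset child (mset_set \<gamma>))"
    using inv child(2) \<open>finite \<gamma>\<close>
    by (intro open_covers_split[OF _ \<open>N \<in># Op\<close> \<open>\<not> consistent V E T M s g \<gamma>\<close>])
      (simp_all add: open_inv_def)
  ultimately have "open_inv (Op - {#N#} + image_mset child (mset_set \<gamma>))"
    by (simp add: open_inv_def)
  moreover have "image_mset child (mset_set \<gamma>) =
      image_mset (\<lambda>a. (fst N - {#\<gamma>#} + {#\<gamma> - {a}#}, Suc (snd N))) (mset_set \<gamma>)"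
    by (rule image_mset_cong) (simp add: child_def)
  ultimately show ?thesis using split by simp
qed

lemma dbs_step_weights_decrease:
  assumes "dbs_step V E T M s g (Running Op) (Running Op')" and "open_inv Op"
  shows "(image_mset node_weight Op', image_mset node_weight Op) \<in> mult1 less_than"
  using assms(1)
proof cases
  case (merge N \<gamma>1 \<gamma>2)
  then have "dt_node_inv M N" using assms(2) by (simp add: open_inv_def)
  note smaller = dt_node_inv_merge(3)[OF this \<open>\<gamma>1 \<in># fst N\<close> \<open>\<gamma>2 \<in># fst N - {#\<gamma>1#}\<close>]
  show ?thesis unfolding merge(1)
    by (rule mult1_replace_by_smaller) (use \<open>N \<in># Op\<close> smaller in auto)
next
  case (split N \<gamma>)
  then have "dt_node_inv M N" using assms(2) by (simp add: open_inv_def)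
  note smaller = dt_node_inv_split(3)[OF this \<open>\<gamma> \<in># fst N\<close>]
  have "finite \<gamma>" using \<open>dt_node_inv M N\<close> split(4) by (simp add: dt_node_inv_def)
  show ?thesis unfolding split(1)
    by (rule mult1_replace_by_smaller) (use \<open>N \<in># Op\<close> \<open>finite \<gamma>\<close> smaller in auto)
qed

lemma dbs_progress:
  assumes "open_inv Op"
  shows "\<exists>S'. dbs_step V E T M s g (Running Op) S'"
proof -
  have "Op \<noteq> {#}"
    using assms consistent_empty[of V E T M s g] by (auto simp: open_inv_def open_covers_def)
  then obtain N where N: "N \<in># Op" and min: "\<forall>N'\<in>#Op. snd N \<le> snd N'"
    using mset_ex_min by blast
  have "fst N \<noteq> {#}" using assms N by (simp add: open_inv_def dt_node_inv_def)
  consider (inconsistent) \<gamma> where "\<gamma> \<in># fst N" "\<not> consistent V E T M s g \<gamma>"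
    | (single) \<gamma> where "\<forall>\<gamma>\<in>#fst N. consistent V E T M s g \<gamma>" "fst N = {#\<gamma>#}"
    | (several) "\<forall>\<gamma>\<in>#fst N. consistent V E T M s g \<gamma>" "size (fst N) \<noteq> 1"
    by (metis size_1_singleton_mset)
  then show ?thesis
  proof cases
    case inconsistent
    then show ?thesis using dbs_step.split[OF N min] by blast
  next
    case single
    then obtain P where "is_solution V E T M s g P" "dom P = \<gamma>"
      by (auto simp: consistent_def)
    then show ?thesis using dbs_step.return[OF N min single] by blast
  next
    case several
    obtain \<gamma>1 where \<gamma>1: "\<gamma>1 \<in># fst N" "\<forall>\<delta>\<in>#fst N. card \<gamma>1 \<le> card \<delta>"
      using mset_ex_min[OF \<open>fst N \<noteq> {#}\<close>] by blast
    have "fst N - {#\<gamma>1#} \<noteq> {#}"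
      using several(2) \<gamma>1(1) by (metis add_mset_remove_trivial_eq size_single)
    then obtain \<gamma>2 where "\<gamma>2 \<in># fst N - {#\<gamma>1#}" "\<forall>\<delta>\<in>#fst N - {#\<gamma>1#}. card \<gamma>2 \<le> card \<delta>"
      using mset_ex_min by blast
    then show ?thesis using dbs_step.merge[OF N min several \<gamma>1] by blast
  qed
qed

end

lemma dbs_inv_reachable:
  assumes "0 < M" and "(dbs_step V E T M s g)\<^sup>*\<^sup>* (dbs_init M) S"
  shows "dbs_inv V E T M s g S"
  using assms(2) by induction (auto intro: dbs_inv_init[OF assms(1)] dbs_inv_step)

lemma dbs_terminates:
  assumes "0 < M"
  shows "\<nexists>f. f 0 = dbs_init M \<and> (\<forall>n. dbs_step V E T M s g (f n) (f (Suc n)))"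
proof
  assume "\<exists>f. f 0 = dbs_init M \<and> (\<forall>n. dbs_step V E T M s g (f n) (f (Suc n)))"
  then obtain f where f0: "f 0 = dbs_init M" and step: "\<And>n. dbs_step V E T M s g (f n) (f (Suc n))"
    by blast
  have "\<forall>n. \<exists>Op. f n = Running Op"
    using step by (blast elim: dbs_step.cases)
  then obtain Ops where Ops: "\<And>n. f n = Running (Ops n)" by metis
  have "dbs_inv V E T M s g (f n)" for n
    by (induction n) (simp_all add: f0 dbs_inv_init[OF assms] dbs_inv_step[OF step])
  then have "(image_mset node_weight (Ops (Suc n)), image_mset node_weight (Ops n))
      \<in> mult1 less_than" for n
    using dbs_step_weights_decrease[of V E T M s g "Ops n" "Ops (Suc n)"] step[of n]
    by (simp add: Ops)
  moreover obtain k where "(image_mset node_weight (Ops (Suc k)), image_mset node_weight (Ops k))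
      \<notin> mult1 less_than"
    using wf_no_infinite_down_chainE[OF wf_mult1[OF wf_less_than]] .
  ultimately show False by blast
qed

theorem theorem3:
  fixes V :: "'v set" and E :: "('v \<times> 'v) set" and T M :: nat and s g :: "nat \<Rightarrow> 'v"
  assumes "mapf_instance V E T M s g" and "0 < M"
  shows "\<not> (\<exists>f. f 0 = dbs_init M \<and> (\<forall>n. dbs_step V E T M s g (f n) (f (Suc n)))) \<and>
         (\<forall>S. (dbs_step V E T M s g)\<^sup>*\<^sup>* (dbs_init M) S \<and> (\<nexists>S'. dbs_step V E T M s g S S') \<longrightarrow>
           (\<exists>P. S = Done P \<and> is_solution V E T M s g P \<and>
                (\<forall>P'. is_solution V E T M s g P' \<longrightarrow> plan_cost M P \<le> plan_cost M P')))"
proof (intro conjI allI impI)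
  show "\<nexists>f. f 0 = dbs_init M \<and> (\<forall>n. dbs_step V E T M s g (f n) (f (Suc n)))"
    using dbs_terminates[OF assms(2)] .
next
  fix S
  assume S: "(dbs_step V E T M s g)\<^sup>*\<^sup>* (dbs_init M) S \<and> (\<nexists>S'. dbs_step V E T M s g S S')"
  then have inv: "dbs_inv V E T M s g S" using dbs_inv_reachable[OF assms(2)] by blast
  show "\<exists>P. S = Done P \<and> is_solution V E T M s g P \<and>
      (\<forall>P'. is_solution V E T M s g P' \<longrightarrow> plan_cost M P \<le> plan_cost M P')"
  proof (cases S)
    case (Running Op)
    then show ?thesis using S inv dbs_progress[of V E T M s g Op] by auto
  next
    case (Done P)
    then show ?thesis using inv by (simp add: optimal_solution_def)
  qed
qed

end
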